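(* Let $\mathcal R_3=\{(0^m1^n2^k,3^m): m,n,k\ge0,\ n\neq k\ \wedge\ (m=k\vee m=n)\}\subseteq\{0,1,2\}^*\times\{3\}^*$. There is no probabilistic finite state transducer computing $\mathcal R_3$ with probability $\alpha$ for any $\alpha>1/2$; in fact, there is no probabilistic finite state transducer computing $\mathcal R_3$ with an isolated cutpoint.
   Context: A probabilistic finite state transducer (pfst) is a tuple $T=(Q,\Sigma_1,\Sigma_2,V,f,q_0,Q_{\rm acc},Q_{\rm rej})$ with finite state set $Q$, finite input/output alphabets $\Sigma_1,\Sigma_2$, initial state $q_0$, disjoint accepting/rejecting sets $Q_{\rm acc},Q_{\rm rej}\subseteq Q$ (the other states are non-halting). For each $a\in\Sigma_1\cup\{\ddagger,\$\}$ ($\ddagger,\$$ are end markers) there is a stochastic $Q\times Q$ matrix $V_a$ and an output function $f_a:Q\to\Sigma_2^*$; $V_\$$ puts all probability on halting states. On input $v$ the machine reads $\ddagger v\$$; in state $q$ reading $a$ it appends $f_a(q)$ to the output tape and moves to state $p$ with probability $(V_a)_{qp}$; if $p$ is accepting (rejecting) it halts and accepts with the current output (rejects). $T(w|v)$ is the probability of accepting with output $w$ on input $v$. For $\alpha>1/2$, $T$ computes $\mathcal R$ with probability $\alpha$ if for all $v,w$: $(v,w)\in\mathcal R\Rightarrow T(w|v)\ge\alpha$ and $(v,w)\notin\mathcal R\Rightarrow T(w|v)\le1-\alpha$. $T$ computes $\mathcal R$ with isolated cutpoint if there are $0<\alpha<1$ and $\varepsilon>0$ such that for all $v,w$: $(v,w)\in\mathcal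 R\Rightarrow T(w|v)\ge\alpha+\varepsilon$ and $(v,w)\notin\mathcal R\Rightarrow T(w|v)\le\alpha-\varepsilon$. *)

theory Defs
  imports Complex_Main
begin

text \<open>Extended input symbols: ordinary letters plus the two end markers
  (LEnd = double dagger, REnd = dollar).\<close>
datatype 'a sym = Sym 'a | LEnd | REnd

definition stochastic :: "('q::finite \<Rightarrow> 'q \<Rightarrow> real) \<Rightarrow> bool" where
  "stochastic M \<longleftrightarrow> (\<forall>q p. 0 \<le> M q p) \<and> (\<forall>q. (\<Sum>p\<in>UNIV. M q p) = 1)"

definition pfst ::
  "'a set \<Rightarrow> 'b set \<Rightarrow> ('a sym \<Rightarrow> 'q::finite \<Rightarrow> 'q \<Rightarrow> real) \<Rightarrow> ('a sym \<Rightarrow> 'q \<Rightarrow> 'b list)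
   \<Rightarrow> 'q \<Rightarrow> 'q set \<Rightarrow> 'q set \<Rightarrow> bool" where
  "pfst S1 S2 V f q0 Qa Qr \<longleftrightarrow>
     finite S1 \<and> finite S2 \<and> Qa \<inter> Qr = {} \<and>
     (\<forall>a \<in> Sym ` S1 \<union> {LEnd, REnd}. stochastic (V a) \<and> (\<forall>q. set (f a q) \<subseteq> S2)) \<and>
     (\<forall>q. (\<Sum>p\<in>Qa \<union> Qr. V REnd q p) = 1)"

text \<open>acc V f Qa Qr xs q w: probability that the machine, currently in the
  non-halting state q with empty remaining output to produce, reads xs and halts
  accepting with (remaining) output exactly w.\<close>
fun acc :: "('a sym \<Rightarrow> 'q::finite \<Rightarrow> 'q \<Rightarrow> real) \<Rightarrow> ('a sym \<Rightarrow> 'q \<Rightarrow> 'b list)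
   \<Rightarrow> 'q set \<Rightarrow> 'q set \<Rightarrow> 'a sym list \<Rightarrow> 'q \<Rightarrow> 'b list \<Rightarrow> real" where
  "acc V f Qa Qr [] q w = 0"
| "acc V f Qa Qr (a # xs) q w =
     (\<Sum>p\<in>UNIV. V a q p *
        (if p \<in> Qa then (if w = f a q then 1 else 0)
         else if p \<in> Qr then 0
         else if take (length (f a q)) w = f a q
              then acc V f Qa Qr xs p (drop (length (f a q)) w) else 0))"

definition Tprob :: "('a sym \<Rightarrow> 'q::finite \<Rightarrow> 'q \<Rightarrow> real) \<Rightarrow> ('a sym \<Rightarrow> 'q \<Rightarrow> 'b list)
   \<Rightarrow> 'q \<Rightarrow> 'q set \<Rightarrow> 'q set \<Rightarrow> 'b list \<Rightarrow> 'a list \<Rightarrow> real" where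
  "Tprob V f q0 Qa Qr w v =
     (if q0 \<in> Qa then (if w = [] then 1 else 0)
      else if q0 \<in> Qr then 0
      else acc V f Qa Qr (LEnd # map Sym v @ [REnd]) q0 w)"

definition computes_with_prob ::
  "'a set \<Rightarrow> 'b set \<Rightarrow> ('a sym \<Rightarrow> 'q::finite \<Rightarrow> 'q \<Rightarrow> real) \<Rightarrow> ('a sym \<Rightarrow> 'q \<Rightarrow> 'b list)
   \<Rightarrow> 'q \<Rightarrow> 'q set \<Rightarrow> 'q set \<Rightarrow> ('a list \<Rightarrow> 'b list \<Rightarrow> bool) \<Rightarrow> real \<Rightarrow> bool" where
  "computes_with_prob S1 S2 V f q0 Qa Qr R \<alpha> \<longleftrightarrow>
     (\<forall>v \<in> lists S1. \<forall>w \<in> lists S2.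
        (R v w \<longrightarrow> Tprob V f q0 Qa Qr w v \<ge> \<alpha>) \<and>
        (\<not> R v w \<longrightarrow> Tprob V f q0 Qa Qr w v \<le> 1 - \<alpha>))"

definition computes_isolated ::
  "'a set \<Rightarrow> 'b set \<Rightarrow> ('a sym \<Rightarrow> 'q::finite \<Rightarrow> 'q \<Rightarrow> real) \<Rightarrow> ('a sym \<Rightarrow> 'q \<Rightarrow> 'b list)
   \<Rightarrow> 'q \<Rightarrow> 'q set \<Rightarrow> 'q set \<Rightarrow> ('a list \<Rightarrow> 'b list \<Rightarrow> bool) \<Rightarrow> bool" where
  "computes_isolated S1 S2 V f q0 Qa Qr R \<longleftrightarrow>
     (\<exists>\<alpha> \<epsilon>. 0 < \<alpha> \<and> \<alpha> < 1 \<and> 0 < \<epsilon> \<and>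
       (\<forall>v \<in> lists S1. \<forall>w \<in> lists S2.
          (R v w \<longrightarrow> Tprob V f q0 Qa Qr w v \<ge> \<alpha> + \<epsilon>) \<and>
          (\<not> R v w \<longrightarrow> Tprob V f q0 Qa Qr w v \<le> \<alpha> - \<epsilon>)))"

definition R3 :: "nat list \<Rightarrow> nat list \<Rightarrow> bool" where
  "R3 v w \<longleftrightarrow> (\<exists>m n k. v = replicate m 0 @ replicate n 1 @ replicate k 2 \<and>
                          w = replicate m 3 \<and> n \<noteq> k \<and> (m = k \<or> m = n))"

end

theory Submission
  imports Defs "HOL-Analysis.Analysis"
begin

text \<open>Write T(m,n,k) for the probability of accepting 0^m 1^n 2^k with output 3^m.
  Cutting a run at the block boundaries, T(m,n,k) is a term independent of k plus a sum,
  weighted by the run on the 0-block, of convolution pairings between the sub-stochastic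
  kernel g_n of the 1-block and the acceptance profile h_k of the 2-block. An isolated
  cutpoint forces T(m,m,N) + T(m,N,m) - T(m,N,N) - T(m,m,m) \<ge> \<epsilon> whenever N \<noteq> m,
  i.e. the pairing of g_m - g_N with h_N - h_m is uniformly bounded below. Along a
  subsequence g_N and h_N converge pointwise to G and H, and the bound survives with G, H in
  place of g_N, h_N. But for m far along that subsequence, g_m and h_m are close to G and H
  on an initial segment whose complement carries only small tails of G and H, so the
  pairing is small: a contradiction.\<close>

section \<open>Pairings of sub-stochastic kernels\<close>

lemma mult_le_of_abs_le:
  fixes x y a b :: "'a::linordered_idom"
  assumes "\<bar>x\<bar> \<le> a" "\<bar>y\<bar> \<le> b"
  shows "x * y \<le> a * b"
proof -
  have "x * y \<le> \<bar>x\<bar> * \<bar>y\<bar>" by (simp add: abs_mult[symmetric])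
  also have "\<dots> \<le> a * b" using assms by (intro mult_mono) auto
  finally show ?thesis .
qed

lemma diff_mult_diff_le:
  fixes a b c d :: "'a::linordered_idom"
  assumes "0 \<le> a" "0 \<le> b" "0 \<le> c" "c \<le> 1" "0 \<le> d" "d \<le> 1"
  shows "(a - b) * (c - d) \<le> \<bar>a - b\<bar>"
    and "(a - b) * (c - d) \<le> (a + b) * \<bar>c - d\<bar>"
    and "(a - b) * (c - d) \<le> a * c + b"
proof -
  show "(a - b) * (c - d) \<le> \<bar>a - b\<bar>"
    using mult_le_of_abs_le[of "a - b" "\<bar>a - b\<bar>" "c - d" 1] assms by simp
  show "(a - b) * (c - d) \<le> (a + b) * \<bar>c - d\<bar>"
    using assms by (intro mult_le_of_abs_le) auto
  have "0 \<le> a * d" "0 \<le> b * c" "b * d \<le> b"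
    using assms by (simp_all add: mult_left_le)
  then show "(a - b) * (c - d) \<le> a * c + b"
    by (simp add: algebra_simps)
qed

definition conv_pairing :: "('q::finite \<Rightarrow> nat \<Rightarrow> real) \<Rightarrow> ('q \<Rightarrow> nat \<Rightarrow> real) \<Rightarrow> nat \<Rightarrow> real" where
  "conv_pairing x y R = (\<Sum>p\<in>UNIV. \<Sum>j\<le>R. x p j * y p (R - j))"

lemma conv_pairing_cross_difference:
  "conv_pairing x y' R + conv_pairing x' y R - conv_pairing x' y' R - conv_pairing x y R =
   conv_pairing (\<lambda>p j. x p j - x' p j) (\<lambda>p j. y' p j - y p j) R"
  unfolding conv_pairing_def
  by (simp add: sum_subtractf[symmetric] sum.distrib[symmetric] algebra_simps)

context
  fixes g G h H :: "'q::finite \<Rightarrow> nat \<Rightarrow> real" and B :: nat and \<delta> \<eta> :: real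
  assumes g_nonneg: "\<And>p j. 0 \<le> g p j" and g_sum: "\<And>R. (\<Sum>p\<in>UNIV. \<Sum>j\<le>R. g p j) \<le> 1"
    and G_nonneg: "\<And>p j. 0 \<le> G p j" and G_sum: "\<And>R. (\<Sum>p\<in>UNIV. \<Sum>j\<le>R. G p j) \<le> 1"
    and h_bounds: "\<And>p j. 0 \<le> h p j \<and> h p j \<le> 1"
    and H_bounds: "\<And>p j. 0 \<le> H p j \<and> H p j \<le> 1"
    and G_tail: "\<And>R. (\<Sum>j\<in>{B<..R}. \<Sum>p\<in>UNIV. G p j) \<le> \<delta>"
    and H_tail: "\<And>p j. B < j \<Longrightarrow> H p j \<le> \<delta>"
    and g_close: "\<And>p j. j \<le> B \<Longrightarrow> \<bar>g p j - G p j\<bar> \<le> \<eta>"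
    and h_close: "\<And>p j. j \<le> B \<Longrightarrow> \<bar>h p j - H p j\<bar> \<le> \<eta>"
    and "0 \<le> \<delta>" and "0 \<le> \<eta>"
begin

lemma conv_term_le:
  "(g p j - G p j) * (H p (R - j) - h p (R - j))
     \<le> (if j \<le> B then \<eta> else 0) + \<eta> * (g p j + G p j) + \<delta> * g p j + (if B < j then G p j else 0)"
proof -
  have "0 \<le> H p (R - j)" "H p (R - j) \<le> 1" "0 \<le> h p (R - j)" "h p (R - j) \<le> 1"
    using h_bounds H_bounds by auto
  note bounds = diff_mult_diff_le[OF g_nonneg[of p j] G_nonneg[of p j] this]
  have "0 \<le> \<eta> * (g p j + G p j)" "0 \<le> \<delta> * g p j"
    using \<open>0 \<le> \<eta>\<close> \<open>0 \<le> \<delta>\<close> g_nonneg G_nonneg by simp_all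
  txt \<open>Either g is close to G at j, or h is close to H at R - j, or both j and R - j
    lie in the small tails of G and H.\<close>
  consider "j \<le> B" | "B < j" "R - j \<le> B" | "B < j" "B < R - j" by linarith
  then show ?thesis
  proof cases
    case 1
    then show ?thesis
      using bounds(1) g_close[OF 1, of p] \<open>0 \<le> \<eta> * (g p j + G p j)\<close> \<open>0 \<le> \<delta> * g p j\<close>
      by simp
  next
    case 2
    have "(g p j + G p j) * \<bar>H p (R - j) - h p (R - j)\<bar> \<le> (g p j + G p j) * \<eta>"
      using h_close[OF 2(2)] g_nonneg[of p j] G_nonneg[of p j]
      by (intro mult_left_mono) (auto simp: abs_minus_commute)
    then have "(g p j - G p j) * (H p (R - j) - h p (R - j)) \<le> \<eta> * (g p j + G p j)"
      using bounds(2) by (simp add: mult.commute)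
    then show ?thesis using 2 \<open>0 \<le> \<delta> * g p j\<close> G_nonneg[of p j] by simp
  next
    case 3
    have "g p j * H p (R - j) \<le> \<delta> * g p j"
      using mult_left_mono[OF H_tail[OF 3(2)] g_nonneg[of p j]] by (simp add: mult.commute)
    then show ?thesis using 3 bounds(3) \<open>0 \<le> \<eta> * (g p j + G p j)\<close> by simp
  qed
qed

lemma conv_pairing_diff_le:
  "conv_pairing (\<lambda>p j. g p j - G p j) (\<lambda>p j. H p j - h p j) R
     \<le> (CARD('q) * (B + 1) + 2) * \<eta> + 2 * \<delta>"
proof -
  define u where "u p j = (if j \<le> B then \<eta> else 0) + \<eta> * (g p j + G p j) + \<delta> * g p j
                          + (if B < j then G p j else 0)" for p j
  have small_indices: "(\<Sum>j\<le>R. if j \<le> B then \<eta> else 0) \<le> (B + 1) * \<eta>"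
  proof -
    have "(\<Sum>j\<le>R. if j \<le> B then \<eta> else 0) = (\<Sum>j\<in>{..R} \<inter> {..B}. \<eta>)"
      unfolding sum.inter_restrict[OF finite_atMost] by simp
    also have "\<dots> \<le> (\<Sum>j\<le>B. \<eta>)" using \<open>0 \<le> \<eta>\<close> by (intro sum_mono2) auto
    finally show ?thesis by simp
  qed
  have large_indices: "(\<Sum>p\<in>UNIV. \<Sum>j\<le>R. if B < j then G p j else 0) \<le> \<delta>"
  proof -
    have "(\<Sum>p\<in>UNIV. \<Sum>j\<le>R. if B < j then G p j else 0)
        = (\<Sum>j\<le>R. if B < j then (\<Sum>p\<in>UNIV. G p j) else 0)"
      by (subst sum.swap) (rule sum.cong; simp)
    also have "\<dots> = (\<Sum>j\<in>{..R} \<inter> {j. B < j}. \<Sum>p\<in>UNIV. G p j)"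
      unfolding sum.inter_restrict[OF finite_atMost] by simp
    also have "{..R} \<inter> {j. B < j} = {B<..R}" by auto
    finally show ?thesis using G_tail by simp
  qed
  have "conv_pairing (\<lambda>p j. g p j - G p j) (\<lambda>p j. H p j - h p j) R \<le> (\<Sum>p\<in>UNIV. \<Sum>j\<le>R. u p j)"
    unfolding conv_pairing_def u_def by (intro sum_mono conv_term_le)
  also have "\<dots> = (\<Sum>p\<in>(UNIV :: 'q set). \<Sum>j\<le>R. if j \<le> B then \<eta> else 0)
      + \<eta> * ((\<Sum>p\<in>UNIV. \<Sum>j\<le>R. g p j) + (\<Sum>p\<in>UNIV. \<Sum>j\<le>R. G p j))
      + \<delta> * (\<Sum>p\<in>UNIV. \<Sum>j\<le>R. g p j) + (\<Sum>p\<in>UNIV. \<Sum>j\<le>R. if B < j then G p j else 0)"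
    unfolding u_def by (simp add: sum.distrib sum_distrib_left algebra_simps)
  also have "\<dots> \<le> CARD('q) * ((B + 1) * \<eta>) + \<eta> * (1 + 1) + \<delta> * 1 + \<delta>"
    using small_indices large_indices g_sum[of R] G_sum[of R] \<open>0 \<le> \<eta>\<close> \<open>0 \<le> \<delta>\<close>
    by (intro add_mono mult_left_mono order_refl sum_bounded_above) auto
  finally show ?thesis by (simp add: algebra_simps)
qed

end

definition cross_pairing ::
  "('q::finite \<Rightarrow> nat \<Rightarrow> real) \<Rightarrow> ('q \<Rightarrow> 'q \<Rightarrow> nat \<Rightarrow> real) \<Rightarrow> ('q \<Rightarrow> 'q \<Rightarrow> nat \<Rightarrow> real)
   \<Rightarrow> ('q \<Rightarrow> nat \<Rightarrow> real) \<Rightarrow> ('q \<Rightarrow> nat \<Rightarrow> real) \<Rightarrow> nat \<Rightarrow> real" where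
  "cross_pairing \<pi> g g' h h' m = (\<Sum>p\<in>UNIV. \<Sum>i\<le>m. \<pi> p i *
     conv_pairing (\<lambda>p' j. g p p' j - g' p p' j) (\<lambda>p' j. h p' j - h' p' j) (m - i))"

lemma tendsto_cross_pairing:
  assumes "\<And>p p' j. (\<lambda>n. g' n p p' j) \<longlonglongrightarrow> G p p' j" and "\<And>p j. (\<lambda>n. h n p j) \<longlonglongrightarrow> H p j"
  shows "(\<lambda>n. cross_pairing \<pi> g (g' n) (h n) h' m) \<longlonglongrightarrow> cross_pairing \<pi> g G H h' m"
  unfolding cross_pairing_def conv_pairing_def by (intro tendsto_intros assms)

lemma cross_pairing_le:
  assumes "\<And>p i. 0 \<le> \<pi> p i" and "(\<Sum>p\<in>UNIV. \<Sum>i\<le>m. \<pi> p i) \<le> 1" and "0 \<le> c"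
    and "\<And>p R. conv_pairing (\<lambda>p' j. g p p' j - g' p p' j) (\<lambda>p' j. h p' j - h' p' j) R \<le> c"
  shows "cross_pairing \<pi> g g' h h' m \<le> c"
proof -
  have "cross_pairing \<pi> g g' h h' m \<le> (\<Sum>p\<in>UNIV. \<Sum>i\<le>m. \<pi> p i * c)"
    unfolding cross_pairing_def by (intro sum_mono mult_left_mono assms)
  also have "\<dots> = c * (\<Sum>p\<in>UNIV. \<Sum>i\<le>m. \<pi> p i)"
    by (simp add: sum_distrib_left mult.commute)
  also have "\<dots> \<le> c"
    using assms(2,3) by (simp add: mult_left_le)
  finally show ?thesis .
qed

lemma bounded_pointwise_convergent_subseq:
  fixes x :: "nat \<Rightarrow> 'i::countable \<Rightarrow> real"
  assumes "\<And>n i. \<bar>x n i\<bar> \<le> M"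
  obtains r l where "strict_mono r" "\<And>i. (\<lambda>n. x (r n) i) \<longlonglongrightarrow> l i"
proof -
  define S :: "('i \<Rightarrow> real) set" where "S = PiE UNIV (\<lambda>_. {-M..M})"
  have "compactin (product_topology (\<lambda>_. euclidean) UNIV) S"
    unfolding S_def by (subst compactin_PiE) auto
  then have "seq_compact S"
    by (simp add: euclidean_product_topology compact_imp_seq_compact)
  moreover have "x n \<in> S" for n
    using assms by (auto simp: S_def abs_le_iff minus_le_iff)
  ultimately obtain l r where "strict_mono r" "(x \<circ> r) \<longlonglongrightarrow> l"
    unfolding seq_compact_def by metis
  moreover have "isCont (\<lambda>y. y i) l" for i
    using continuous_on_eq_continuous_at[OF open_UNIV, of "\<lambda>y::'i \<Rightarrow> real. y i"] by simp
  ultimately show ?thesis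
    using that isCont_tendsto_compose by (fastforce simp: comp_def)
qed

lemma le_of_partial_sums_le:
  fixes f :: "nat \<Rightarrow> real"
  assumes "\<And>j. 0 \<le> f j" and "\<And>J. (\<Sum>j\<le>J. f j) \<le> c"
  shows "f j \<le> c"
proof -
  have "f j \<le> (\<Sum>i\<le>j. f i)" by (rule member_le_sum) (auto intro: assms(1))
  also have "\<dots> \<le> c" by (rule assms(2))
  finally show ?thesis .
qed

lemma sub_stochastic_subseq_limits:
  fixes g :: "nat \<Rightarrow> 'q::finite \<Rightarrow> 'q \<Rightarrow> nat \<Rightarrow> real" and h :: "nat \<Rightarrow> 'q \<Rightarrow> nat \<Rightarrow> real"
  assumes g_nonneg: "\<And>n p p' j. 0 \<le> g n p p' j"
    and g_sum: "\<And>n p J. (\<Sum>p'\<in>UNIV. \<Sum>j\<le>J. g n p p' j) \<le> 1"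
    and h_nonneg: "\<And>n p j. 0 \<le> h n p j"
    and h_sum: "\<And>n p J. (\<Sum>j\<le>J. h n p j) \<le> 1"
  obtains r G H where "strict_mono r"
    and "\<And>p p' j. (\<lambda>n. g (r n) p p' j) \<longlonglongrightarrow> G p p' j"
    and "\<And>p j. (\<lambda>n. h (r n) p j) \<longlonglongrightarrow> H p j"
    and "\<And>p p' j. 0 \<le> G p p' j" and "\<And>p J. (\<Sum>p'\<in>UNIV. \<Sum>j\<le>J. G p p' j) \<le> 1"
    and "\<And>p j. 0 \<le> H p j" and "\<And>p J. (\<Sum>j\<le>J. H p j) \<le> 1"
proof -
  have g_le: "g n p p' j \<le> 1" for n p p' j
  proof -
    have "g n p p' j \<le> (\<Sum>j'\<le>j. g n p p' j')"
      by (rule member_le_sum) (auto intro: g_nonneg)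
    also have "\<dots> \<le> (\<Sum>p''\<in>UNIV. \<Sum>j'\<le>j. g n p p'' j')"
      by (rule member_le_sum) (auto intro: sum_nonneg g_nonneg)
    finally show ?thesis using g_sum order_trans by blast
  qed
  have h_le: "h n p j \<le> 1" for n p j
    using h_nonneg h_sum by (rule le_of_partial_sums_le)
  obtain r1 G' where r1: "strict_mono r1" and G': "\<And>t. (\<lambda>n. g (r1 n) (fst t) (fst (snd t)) (snd (snd t))) \<longlonglongrightarrow> G' t"
    using bounded_pointwise_convergent_subseq[of "\<lambda>n t. g n (fst t) (fst (snd t)) (snd (snd t))" 1]
    using g_nonneg g_le by (metis abs_of_nonneg)
  obtain r2 H' where r2: "strict_mono r2" and H': "\<And>t. (\<lambda>n. h (r1 (r2 n)) (fst t) (snd t)) \<longlonglongrightarrow> H' t"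
    using bounded_pointwise_convergent_subseq[of "\<lambda>n t. h (r1 n) (fst t) (snd t)" 1]
    using h_nonneg h_le by (metis abs_of_nonneg)
  define G where "G p p' j = G' (p, p', j)" for p p' j
  define H where "H p j = H' (p, j)" for p j
  have g_lim: "(\<lambda>n. g (r1 (r2 n)) p p' j) \<longlonglongrightarrow> G p p' j" for p p' j
    using LIMSEQ_subseq_LIMSEQ[OF G'[of "(p, p', j)"] r2] by (simp add: G_def comp_def)
  have h_lim: "(\<lambda>n. h (r1 (r2 n)) p j) \<longlonglongrightarrow> H p j" for p j
    using H'[of "(p, j)"] by (simp add: H_def)
  show thesis
  proof (rule that[of "r1 \<circ> r2" G H])
    show "strict_mono (r1 \<circ> r2)" using r1 r2 by (rule strict_mono_o)
    show "(\<lambda>n. g ((r1 \<circ> r2) n) p p' j) \<longlonglongrightarrow> G p p' j" for p p' j using g_lim by simp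
    show "(\<lambda>n. h ((r1 \<circ> r2) n) p j) \<longlonglongrightarrow> H p j" for p j using h_lim by simp
    show "0 \<le> G p p' j" for p p' j by (rule LIMSEQ_le_const[OF g_lim]) (simp add: g_nonneg)
    show "0 \<le> H p j" for p j by (rule LIMSEQ_le_const[OF h_lim]) (simp add: h_nonneg)
    show "(\<Sum>p'\<in>UNIV. \<Sum>j\<le>J. G p p' j) \<le> 1" for p J
      by (rule LIMSEQ_le_const2[OF tendsto_sum[OF tendsto_sum[OF g_lim]]]) (simp add: g_sum)
    show "(\<Sum>j\<le>J. H p j) \<le> 1" for p J
      by (rule LIMSEQ_le_const2[OF tendsto_sum[OF h_lim]]) (simp add: h_sum)
  qed
qed

lemma tail_sum_eventually_le:
  fixes f :: "nat \<Rightarrow> real"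
  assumes nonneg: "\<And>j. 0 \<le> f j" and bounded: "\<And>J. (\<Sum>j\<le>J. f j) \<le> c" and "0 < \<epsilon>"
  shows "\<forall>\<^sub>F B in sequentially. \<forall>R. (\<Sum>j\<in>{B<..R}. f j) \<le> \<epsilon>"
proof -
  have "summable f"
  proof (rule summableI_nonneg_bounded[OF nonneg])
    show "(\<Sum>j<n. f j) \<le> c" for n
      using sum_mono2[of "{..n}" "{..<n}" f] bounded[of n] nonneg by force
  qed
  then obtain N where N: "\<And>m n. N \<le> m \<Longrightarrow> norm (\<Sum>j=m..n. f j) < \<epsilon>"
    using summable_partial_sum_bound[OF _ \<open>0 < \<epsilon>\<close>] by blast
  have "(\<Sum>j\<in>{B<..R}. f j) \<le> \<epsilon>" if "N \<le> B" for B R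
    using N[of "Suc B" R] that by (simp add: atLeastSucAtMost_greaterThanAtMost)
  then show ?thesis
    unfolding eventually_sequentially by blast
qed

lemma sub_stochastic_uniform_tail:
  fixes G :: "'q::finite \<Rightarrow> 'q \<Rightarrow> nat \<Rightarrow> real" and H :: "'q \<Rightarrow> nat \<Rightarrow> real"
  assumes G_nonneg: "\<And>p p' j. 0 \<le> G p p' j" and G_sum: "\<And>p J. (\<Sum>p'\<in>UNIV. \<Sum>j\<le>J. G p p' j) \<le> 1"
    and H_nonneg: "\<And>p j. 0 \<le> H p j" and H_sum: "\<And>p J. (\<Sum>j\<le>J. H p j) \<le> 1"
    and "0 < \<delta>"
  obtains B where "\<And>p R. (\<Sum>j\<in>{B<..R}. \<Sum>p'\<in>UNIV. G p p' j) \<le> \<delta>"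
    and "\<And>p j. B < j \<Longrightarrow> H p j \<le> \<delta>"
proof -
  have G_tail: "\<forall>\<^sub>F B in sequentially. \<forall>R. (\<Sum>j\<in>{B<..R}. \<Sum>p'\<in>UNIV. G p p' j) \<le> \<delta>" for p
  proof (rule tail_sum_eventually_le[OF _ _ \<open>0 < \<delta>\<close>])
    show "0 \<le> (\<Sum>p'\<in>UNIV. G p p' j)" for j by (intro sum_nonneg G_nonneg)
    show "(\<Sum>j\<le>J. \<Sum>p'\<in>UNIV. G p p' j) \<le> 1" for J by (subst sum.swap) (rule G_sum)
  qed
  have H_tail: "\<forall>\<^sub>F B in sequentially. \<forall>R. (\<Sum>j\<in>{B<..R}. H p j) \<le> \<delta>" for p
    by (rule tail_sum_eventually_le[OF H_nonneg H_sum \<open>0 < \<delta>\<close>])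
  have "\<forall>\<^sub>F B in sequentially. (\<forall>p R. (\<Sum>j\<in>{B<..R}. \<Sum>p'\<in>UNIV. G p p' j) \<le> \<delta>)
                              \<and> (\<forall>p R. (\<Sum>j\<in>{B<..R}. H p j) \<le> \<delta>)"
    by (intro eventually_conj eventually_all_finite G_tail H_tail)
  then obtain B where "\<And>p R. (\<Sum>j\<in>{B<..R}. \<Sum>p'\<in>UNIV. G p p' j) \<le> \<delta>"
    and H_tail_sum: "\<And>p R. (\<Sum>j\<in>{B<..R}. H p j) \<le> \<delta>"
    unfolding eventually_sequentially by blast
  moreover have "H p j \<le> \<delta>" if "B < j" for p j
    using member_le_sum[of j "{B<..j}" "H p"] H_nonneg H_tail_sum[of p j] that by fastforce
  ultimately show thesis using that by blast
qed

lemma no_uniform_cross_gap: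
  fixes g :: "nat \<Rightarrow> 'q::finite \<Rightarrow> 'q \<Rightarrow> nat \<Rightarrow> real" and h \<pi> :: "nat \<Rightarrow> 'q \<Rightarrow> nat \<Rightarrow> real"
  assumes g_nonneg: "\<And>n p p' j. 0 \<le> g n p p' j"
    and g_sum: "\<And>n p J. (\<Sum>p'\<in>UNIV. \<Sum>j\<le>J. g n p p' j) \<le> 1"
    and h_nonneg: "\<And>n p j. 0 \<le> h n p j"
    and h_sum: "\<And>n p J. (\<Sum>j\<le>J. h n p j) \<le> 1"
    and \<pi>_nonneg: "\<And>m p i. 0 \<le> \<pi> m p i"
    and \<pi>_sum: "\<And>m. (\<Sum>p\<in>UNIV. \<Sum>i\<le>m. \<pi> m p i) \<le> 1"
    and "0 < \<epsilon>"
    and gap: "\<And>m N. N \<noteq> m \<Longrightarrow> \<epsilon> \<le> cross_pairing (\<pi> m) (g m) (g N) (h N) (h m) m"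
  shows False
proof -
  obtain r G H where r: "strict_mono r"
    and g_lim: "\<And>p p' j. (\<lambda>n. g (r n) p p' j) \<longlonglongrightarrow> G p p' j"
    and h_lim: "\<And>p j. (\<lambda>n. h (r n) p j) \<longlonglongrightarrow> H p j"
    and G_nonneg: "\<And>p p' j. 0 \<le> G p p' j" and G_sum: "\<And>p J. (\<Sum>p'\<in>UNIV. \<Sum>j\<le>J. G p p' j) \<le> 1"
    and H_nonneg: "\<And>p j. 0 \<le> H p j" and H_sum: "\<And>p J. (\<Sum>j\<le>J. H p j) \<le> 1"
    using sub_stochastic_subseq_limits[of g h, OF g_nonneg g_sum h_nonneg h_sum] by blast
  have limit_gap: "\<epsilon> \<le> cross_pairing (\<pi> m) (g m) G H (h m) m" for m
  proof (rule LIMSEQ_le_const[OF tendsto_cross_pairing[OF g_lim h_lim]])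
    have "r n \<noteq> m" if "Suc m \<le> n" for n
      using seq_suble[OF r, of n] that by simp
    then show "\<exists>N. \<forall>n\<ge>N. \<epsilon> \<le> cross_pairing (\<pi> m) (g m) (g (r n)) (h (r n)) (h m) m"
      using gap by blast
  qed
  define \<delta> where "\<delta> = \<epsilon> / 4"
  have "0 < \<delta>" using \<open>0 < \<epsilon>\<close> by (simp add: \<delta>_def)
  obtain B where G_tail: "\<And>p R. (\<Sum>j\<in>{B<..R}. \<Sum>p'\<in>UNIV. G p p' j) \<le> \<delta>"
    and H_tail: "\<And>p j. B < j \<Longrightarrow> H p j \<le> \<delta>"
    using sub_stochastic_uniform_tail[of G H, OF G_nonneg G_sum H_nonneg H_sum \<open>0 < \<delta>\<close>] by blast
  define D where "D = real CARD('q) * (B + 1) + 2"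
  have "0 < D" by (simp add: D_def add_pos_nonneg)
  define \<eta> where "\<eta> = \<delta> / D"
  have "0 < \<eta>" "D * \<eta> = \<delta>" using \<open>0 < \<delta>\<close> \<open>0 < D\<close> by (simp_all add: \<eta>_def)
  have "\<forall>\<^sub>F n in sequentially. (\<forall>p p'. \<forall>j\<in>{..B}. dist (g (r n) p p' j) (G p p' j) < \<eta>)
                              \<and> (\<forall>p. \<forall>j\<in>{..B}. dist (h (r n) p j) (H p j) < \<eta>)"
    using \<open>0 < \<eta>\<close> by (intro eventually_conj eventually_all_finite eventually_ball_finite
        finite_atMost ballI allI tendstoD[OF g_lim] tendstoD[OF h_lim])
  then obtain m where "\<forall>p p'. \<forall>j\<in>{..B}. dist (g m p p' j) (G p p' j) < \<eta>"
    and "\<forall>p. \<forall>j\<in>{..B}. dist (h m p j) (H p j) < \<eta>"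
    unfolding eventually_sequentially by blast
  then have g_close: "\<And>p p' j. j \<le> B \<Longrightarrow> \<bar>g m p p' j - G p p' j\<bar> \<le> \<eta>"
    and h_close: "\<And>p j. j \<le> B \<Longrightarrow> \<bar>h m p j - H p j\<bar> \<le> \<eta>"
    by (auto simp: dist_real_def less_imp_le)
  have h_le: "h m p j \<le> 1" and H_le: "H p j \<le> 1" for p j
    by (rule le_of_partial_sums_le[of "h m p", OF h_nonneg h_sum],
        rule le_of_partial_sums_le[of "H p", OF H_nonneg H_sum])
  have "conv_pairing (\<lambda>p' j. g m p p' j - G p p' j) (\<lambda>p' j. H p' j - h m p' j) R
          \<le> (CARD('q) * (B + 1) + 2) * \<eta> + 2 * \<delta>" for p R
  proof (rule conv_pairing_diff_le)
    show "0 \<le> h m p' j \<and> h m p' j \<le> 1" "0 \<le> H p' j \<and> H p' j \<le> 1" for p' j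
      using h_nonneg h_le H_nonneg H_le by auto
  qed (use g_nonneg g_sum G_nonneg G_sum G_tail H_tail g_close h_close \<open>0 < \<delta>\<close> \<open>0 < \<eta>\<close> in auto)
  also have "(CARD('q) * (B + 1) + 2) * \<eta> + 2 * \<delta> = 3 * \<delta>"
    using \<open>D * \<eta> = \<delta>\<close> by (simp add: D_def algebra_simps)
  finally have "cross_pairing (\<pi> m) (g m) G H (h m) m \<le> 3 * \<delta>"
    using \<pi>_nonneg \<pi>_sum \<open>0 < \<delta>\<close> by (intro cross_pairing_le) auto
  then show False
    using limit_gap[of m] \<open>0 < \<epsilon>\<close> by (simp add: \<delta>_def)
qed

section \<open>Runs of a transducer\<close>

text \<open>reach V f Qa Qr xs q p u: probability that the machine, started in the non-halting
  state q, reads xs without halting, ends in state p and has output exactly u.\<close>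
fun reach :: "('a sym \<Rightarrow> 'q::finite \<Rightarrow> 'q \<Rightarrow> real) \<Rightarrow> ('a sym \<Rightarrow> 'q \<Rightarrow> 'b list)
   \<Rightarrow> 'q set \<Rightarrow> 'q set \<Rightarrow> 'a sym list \<Rightarrow> 'q \<Rightarrow> 'q \<Rightarrow> 'b list \<Rightarrow> real" where
  "reach V f Qa Qr [] q p u = (if p = q \<and> u = [] then 1 else 0)"
| "reach V f Qa Qr (a # xs) q p u =
     (\<Sum>p'\<in>UNIV. V a q p' *
        (if p' \<in> Qa then 0
         else if p' \<in> Qr then 0
         else if take (length (f a q)) u = f a q
              then reach V f Qa Qr xs p' p (drop (length (f a q)) u) else 0))"

lemma acc_nonneg:
  assumes "\<forall>a\<in>set xs. stochastic (V a)"
  shows "0 \<le> acc V f Qa Qr xs q w"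
  using assms
  by (induction xs arbitrary: q w) (auto simp: stochastic_def intro!: sum_nonneg)

lemma reach_nonneg:
  assumes "\<forall>a\<in>set xs. stochastic (V a)"
  shows "0 \<le> reach V f Qa Qr xs q p u"
  using assms
  by (induction xs arbitrary: q u) (auto simp: stochastic_def intro!: sum_nonneg)

lemma sum_if_take_eq_reindex:
  fixes F :: "'b list \<Rightarrow> real"
  assumes "finite U"
  shows "(\<Sum>u\<in>U. if take L u = c then F (drop L u) else 0) = sum F (drop L ` {u\<in>U. take L u = c})"
proof -
  have "inj_on (drop L) {u\<in>U. take L u = c}"
    by (rule inj_onI) (metis (mono_tags, lifting) append_take_drop_id mem_Collect_eq)
  then show ?thesis
    using assms by (simp add: sum.inter_filter sum.reindex)
qed

lemma acc_sum_le_1: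
  assumes "\<forall>a\<in>set xs. stochastic (V a)" and "finite U"
  shows "(\<Sum>u\<in>U. acc V f Qa Qr xs q u) \<le> 1"
  using assms
proof (induction xs arbitrary: q U)
  case Nil then show ?case by simp
next
  case (Cons a xs)
  let ?c = "f a q"
  have V: "\<And>p. 0 \<le> V a q p" "(\<Sum>p\<in>UNIV. V a q p) = 1"
    using Cons.prems by (auto simp: stochastic_def)
  have step: "(\<Sum>u\<in>U. if p \<in> Qa then (if u = ?c then 1 else 0) else if p \<in> Qr then 0
      else if take (length ?c) u = ?c then acc V f Qa Qr xs p (drop (length ?c) u) else 0) \<le> 1" for p
  proof -
    have "(\<Sum>u\<in>U. if take (length ?c) u = ?c then acc V f Qa Qr xs p (drop (length ?c) u) else 0) \<le> 1"
      using Cons.IH[where q=p] Cons.prems by (simp add: sum_if_take_eq_reindex)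
    then show ?thesis
      using Cons.prems(2) by (cases "p \<in> Qa"; cases "p \<in> Qr") (simp_all add: sum.delta')
  qed
  have "(\<Sum>u\<in>U. acc V f Qa Qr (a # xs) q u) = (\<Sum>p\<in>UNIV. V a q p * (\<Sum>u\<in>U.
      if p \<in> Qa then (if u = ?c then 1 else 0) else if p \<in> Qr then 0
      else if take (length ?c) u = ?c then acc V f Qa Qr xs p (drop (length ?c) u) else 0))"
    unfolding acc.simps sum_distrib_left by (rule sum.swap)
  also have "\<dots> \<le> (\<Sum>p\<in>UNIV. V a q p * 1)"
    by (intro sum_mono mult_left_mono step V)
  finally show ?case using V by simp
qed

lemma reach_sum_le_1:
  assumes "\<forall>a\<in>set xs. stochastic (V a)" and "finite U"
  shows "(\<Sum>p\<in>UNIV. \<Sum>u\<in>U. reach V f Qa Qr xs q p u) \<le> 1"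
  using assms
proof (induction xs arbitrary: q U)
  case Nil
  have "(\<Sum>u\<in>U. reach V f Qa Qr [] q p u) = (if p = q \<and> [] \<in> U then 1 else 0)" for p
    using Nil by (cases "p = q") (simp_all add: sum.delta)
  then show ?case by (cases "[] \<in> U") simp_all
next
  case (Cons a xs)
  let ?c = "f a q"
  have V: "\<And>p. 0 \<le> V a q p" "(\<Sum>p\<in>UNIV. V a q p) = 1"
    using Cons.prems by (auto simp: stochastic_def)
  define I where "I p' p u = (if p' \<in> Qa then 0 else if p' \<in> Qr then 0
      else if take (length ?c) u = ?c then reach V f Qa Qr xs p' p (drop (length ?c) u) else 0)" for p' p u
  have step: "(\<Sum>p\<in>UNIV. \<Sum>u\<in>U. I p' p u) \<le> 1" for p'
    using Cons.IH[where q=p'] Cons.prems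
    by (cases "p' \<in> Qa"; cases "p' \<in> Qr") (simp_all add: I_def sum_if_take_eq_reindex)
  have "(\<Sum>p\<in>UNIV. \<Sum>u\<in>U. reach V f Qa Qr (a # xs) q p u) = (\<Sum>p\<in>UNIV. \<Sum>u\<in>U. \<Sum>p'\<in>UNIV. V a q p' * I p' p u)"
    by (simp add: I_def)
  also have "\<dots> = (\<Sum>p\<in>UNIV. \<Sum>p'\<in>UNIV. \<Sum>u\<in>U. V a q p' * I p' p u)"
    by (rule sum.cong[OF refl], rule sum.swap)
  also have "\<dots> = (\<Sum>p'\<in>UNIV. V a q p' * (\<Sum>p\<in>UNIV. \<Sum>u\<in>U. I p' p u))"
    unfolding sum_distrib_left by (rule sum.swap)
  also have "\<dots> \<le> (\<Sum>p'\<in>UNIV. V a q p' * 1)"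
    by (intro sum_mono mult_left_mono step V)
  finally show ?case using V by simp
qed

lemma reach_Cons_live:
  "reach V f Qa Qr (a # xs) q p u = (\<Sum>p'\<in>UNIV. V a q p' *
     (if p' \<notin> Qa \<and> p' \<notin> Qr \<and> take (length (f a q)) u = f a q
      then reach V f Qa Qr xs p' p (drop (length (f a q)) u) else 0))"
  by (auto intro!: sum.cong)

lemma sum_splits_with_prefix:
  fixes \<Phi> :: "'b list \<Rightarrow> 'b list \<Rightarrow> real"
  shows "(\<Sum>i\<le>length w. if take (length c) (take i w) = c then \<Phi> (drop (length c) (take i w)) (drop i w) else 0)
    = (if take (length c) w = c
       then (\<Sum>i\<le>length w - length c. \<Phi> (take i (drop (length c) w)) (drop i (drop (length c) w))) else 0)"
proof -
  let ?L = "length c"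
  have short: "take i w \<noteq> c" if "i < ?L" for i
    using that arg_cong[of "take i w" c length] by auto
  show ?thesis
  proof (cases "take ?L w = c")
    case no_prefix: False
    have "take ?L (take i w) \<noteq> c" for i
    proof (cases "i < ?L")
      case True
      then show ?thesis using short[of i] by simp
    next
      case False
      then show ?thesis using no_prefix by (simp add: min_absorb1)
    qed
    then show ?thesis using no_prefix by simp
  next
    case True
    then have "?L \<le> length w" by (metis length_take min.absorb_iff1 min.commute)
    then have split: "{..length w} = {..<?L} \<union> (\<lambda>i. i + ?L) ` {..length w - ?L}"
    proof -
      have "i \<in> (\<lambda>i. i + ?L) ` {..length w - ?L}" if "?L \<le> i" "i \<le> length w" for i
        using that by (intro image_eqI[of _ _ "i - ?L"]) auto
      then show ?thesis using \<open>?L \<le> length w\<close> by auto (meson not_le)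
    qed
    have "(\<Sum>i\<le>length w. if take ?L (take i w) = c then \<Phi> (drop ?L (take i w)) (drop i w) else 0)
        = (\<Sum>i\<in>(\<lambda>i. i + ?L) ` {..length w - ?L}.
             if take ?L (take i w) = c then \<Phi> (drop ?L (take i w)) (drop i w) else 0)"
      unfolding split by (subst sum.union_disjoint) (auto simp: short)
    also have "\<dots> = (\<Sum>i\<le>length w - ?L. \<Phi> (take i (drop ?L w)) (drop i (drop ?L w)))"
      using True by (subst sum.reindex) (auto simp: inj_on_def drop_take add.commute)
    finally show ?thesis using True by simp
  qed
qed

definition acc_after :: "('a sym \<Rightarrow> 'q::finite \<Rightarrow> 'q \<Rightarrow> real) \<Rightarrow> ('a sym \<Rightarrow> 'q \<Rightarrow> 'b list)
   \<Rightarrow> 'q set \<Rightarrow> 'q set \<Rightarrow> 'a sym list \<Rightarrow> 'a sym list \<Rightarrow> 'q \<Rightarrow> 'b list \<Rightarrow> real" where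
  "acc_after V f Qa Qr xs ys q w = (\<Sum>p\<in>UNIV. \<Sum>i\<le>length w.
     reach V f Qa Qr xs q p (take i w) * acc V f Qa Qr ys p (drop i w))"

lemma acc_after_Nil: "acc_after V f Qa Qr [] ys q w = acc V f Qa Qr ys q w"
proof -
  have "acc_after V f Qa Qr [] ys q w
      = (\<Sum>p\<in>UNIV. \<Sum>i\<le>length w. if i = 0 then if p = q then acc V f Qa Qr ys q w else 0 else 0)"
    unfolding acc_after_def by (intro sum.cong refl) auto
  then show ?thesis by (simp add: sum.delta)
qed

lemma acc_after_Cons:
  "acc_after V f Qa Qr (a # xs) ys q w = (\<Sum>p'\<in>UNIV. V a q p' *
     (if p' \<notin> Qa \<and> p' \<notin> Qr \<and> take (length (f a q)) w = f a q
      then acc_after V f Qa Qr xs ys p' (drop (length (f a q)) w) else 0))"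
proof -
  let ?c = "f a q" and ?L = "length (f a q)"
  define live where "live p' \<longleftrightarrow> p' \<notin> Qa \<and> p' \<notin> Qr" for p'
  define X where "X p' p i = (if live p' \<and> take ?L (take i w) = ?c
      then reach V f Qa Qr xs p' p (drop ?L (take i w)) * acc V f Qa Qr ys p (drop i w) else 0)" for p' p i
  have inner: "(\<Sum>p\<in>UNIV. \<Sum>i\<le>length w. X p' p i)
      = (if live p' \<and> take ?L w = ?c then acc_after V f Qa Qr xs ys p' (drop ?L w) else 0)" for p'
  proof (cases "live p'")
    case True
    have "(\<Sum>i\<le>length w. X p' p i)
        = (if take ?L w = ?c then (\<Sum>i\<le>length (drop ?L w).
            reach V f Qa Qr xs p' p (take i (drop ?L w)) * acc V f Qa Qr ys p (drop i (drop ?L w)))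
           else 0)" for p
      unfolding X_def length_drop using True
      by (simp only: simp_thms sum_splits_with_prefix[where
            \<Phi>="\<lambda>u v. reach V f Qa Qr xs p' p u * acc V f Qa Qr ys p v"])
    then show ?thesis
      using True unfolding acc_after_def by (cases "take ?L w = ?c") simp_all
  qed (simp add: X_def)
  have "acc_after V f Qa Qr (a # xs) ys q w = (\<Sum>p\<in>UNIV. \<Sum>i\<le>length w. \<Sum>p'\<in>UNIV. V a q p' * X p' p i)"
    unfolding acc_after_def reach_Cons_live live_def X_def sum_distrib_right
    by (intro sum.cong refl) (simp add: mult.assoc)
  also have "\<dots> = (\<Sum>p'\<in>UNIV. V a q p' * (\<Sum>p\<in>UNIV. \<Sum>i\<le>length w. X p' p i))"
    unfolding sum_distrib_left by (subst sum.swap) (rule sum.cong[OF refl], rule sum.swap)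
  also have "\<dots> = (\<Sum>p'\<in>UNIV. V a q p' *
      (if live p' \<and> take ?L w = ?c then acc_after V f Qa Qr xs ys p' (drop ?L w) else 0))"
    unfolding inner ..
  finally show ?thesis by (simp add: live_def)
qed

lemma acc_append: "acc V f Qa Qr (xs @ ys) q w = acc V f Qa Qr xs q w + acc_after V f Qa Qr xs ys q w"
proof (induction xs arbitrary: q w)
  case Nil
  then show ?case by (simp add: acc_after_Nil)
next
  case (Cons a xs)
  let ?c = "f a q" and ?L = "length (f a q)"
  have "acc V f Qa Qr ((a # xs) @ ys) q w = (\<Sum>p'\<in>UNIV. V a q p' *
      ((if p' \<in> Qa then (if w = ?c then 1 else 0) else if p' \<in> Qr then 0
        else if take ?L w = ?c then acc V f Qa Qr xs p' (drop ?L w) else 0)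
       + (if p' \<notin> Qa \<and> p' \<notin> Qr \<and> take ?L w = ?c then acc_after V f Qa Qr xs ys p' (drop ?L w) else 0)))"
    unfolding append_Cons acc.simps(2)
    by (intro sum.cong refl arg_cong2[where f="(*)"]) (simp add: Cons.IH)
  also have "\<dots> = acc V f Qa Qr (a # xs) q w + acc_after V f Qa Qr (a # xs) ys q w"
    unfolding acc_after_Cons by (simp add: distrib_left sum.distrib)
  finally show ?case .
qed

lemma sum_replicate_le_of_finite_sums:
  fixes F :: "'b list \<Rightarrow> real"
  assumes "\<And>U. finite U \<Longrightarrow> sum F U \<le> b"
  shows "(\<Sum>j\<le>J. F (replicate j c)) \<le> b"
proof -
  have "(\<Sum>j\<le>J. F (replicate j c)) = sum F ((\<lambda>j. replicate j c) ` {..J})"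
    by (simp add: sum.reindex inj_on_def)
  then show ?thesis using assms by simp
qed

lemma acc_sum_replicate_le_1:
  "\<forall>a\<in>set xs. stochastic (V a) \<Longrightarrow> (\<Sum>j\<le>J. acc V f Qa Qr xs q (replicate j c)) \<le> 1"
  by (intro sum_replicate_le_of_finite_sums acc_sum_le_1)

lemma reach_sum_replicate_le_1:
  assumes "\<forall>a\<in>set xs. stochastic (V a)"
  shows "(\<Sum>p\<in>UNIV. \<Sum>j\<le>J. reach V f Qa Qr xs q p (replicate j c)) \<le> 1"
proof -
  have "(\<Sum>p\<in>UNIV. \<Sum>j\<le>J. reach V f Qa Qr xs q p (replicate j c))
      = (\<Sum>j\<le>J. \<Sum>p\<in>UNIV. reach V f Qa Qr xs q p (replicate j c))"
    by (rule sum.swap)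
  also have "\<dots> \<le> 1"
    using reach_sum_le_1[OF assms] by (intro sum_replicate_le_of_finite_sums) (simp add: sum.swap[of _ UNIV])
  finally show ?thesis .
qed

lemma acc_append_replicate:
  "acc V f Qa Qr (xs @ ys) q (replicate m c) = acc V f Qa Qr xs q (replicate m c) +
     (\<Sum>p\<in>UNIV. \<Sum>i\<le>m. reach V f Qa Qr xs q p (replicate i c) * acc V f Qa Qr ys p (replicate (m - i) c))"
  unfolding acc_append acc_after_def length_replicate
  by (intro arg_cong2[where f="(+)"] refl sum.cong) (auto simp: take_replicate drop_replicate min_def)

lemma Tprob_three_blocks:
  assumes "q0 \<notin> Qa" "q0 \<notin> Qr"
  shows "Tprob V f q0 Qa Qr (replicate m c) (xs @ ys @ zs) =
    acc V f Qa Qr (LEnd # map Sym xs) q0 (replicate m c) +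
    (\<Sum>p\<in>UNIV. \<Sum>i\<le>m. reach V f Qa Qr (LEnd # map Sym xs) q0 p (replicate i c) *
       (acc V f Qa Qr (map Sym ys) p (replicate (m - i) c) +
        conv_pairing (\<lambda>p' j. reach V f Qa Qr (map Sym ys) p p' (replicate j c))
                     (\<lambda>p' j. acc V f Qa Qr (map Sym zs @ [REnd]) p' (replicate j c)) (m - i)))"
proof -
  have "LEnd # map Sym (xs @ ys @ zs) @ [REnd]
      = (LEnd # map Sym xs) @ map Sym ys @ (map Sym zs @ [REnd])"
    by simp
  then show ?thesis
    using assms by (simp only: Tprob_def if_False acc_append_replicate conv_pairing_def diff_diff_left)
qed

lemma Tprob_cross_difference:
  fixes V :: "'a sym \<Rightarrow> 'q::finite \<Rightarrow> 'q \<Rightarrow> real" and f :: "'a sym \<Rightarrow> 'q \<Rightarrow> 'b list"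
    and xs :: "'a list" and m :: nat and c :: 'b
  assumes q0: "q0 \<notin> Qa" "q0 \<notin> Qr"
  defines "T \<equiv> \<lambda>ys zs. Tprob V f q0 Qa Qr (replicate m c) (xs @ ys @ zs)"
  shows "T ys zs' + T ys' zs - T ys' zs' - T ys zs = cross_pairing
    (\<lambda>p i. reach V f Qa Qr (LEnd # map Sym xs) q0 p (replicate i c))
    (\<lambda>p p' j. reach V f Qa Qr (map Sym ys) p p' (replicate j c))
    (\<lambda>p p' j. reach V f Qa Qr (map Sym ys') p p' (replicate j c))
    (\<lambda>p' j. acc V f Qa Qr (map Sym zs' @ [REnd]) p' (replicate j c))
    (\<lambda>p' j. acc V f Qa Qr (map Sym zs @ [REnd]) p' (replicate j c)) m"
proof -
  define \<pi> where "\<pi> p i = reach V f Qa Qr (LEnd # map Sym xs) q0 p (replicate i c)" for p i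
  define g where "g ys p p' j = reach V f Qa Qr (map Sym ys) p p' (replicate j c)" for ys p p' j
  define h where "h zs p' j = acc V f Qa Qr (map Sym zs @ [REnd]) p' (replicate j c)" for zs p' j
  define A where "A ys p i = acc V f Qa Qr (map Sym ys) p (replicate (m - i) c)" for ys p i
  define C where "C ys zs p i = conv_pairing (g ys p) (h zs) (m - i)" for ys zs p i
  have T: "T ys zs = acc V f Qa Qr (LEnd # map Sym xs) q0 (replicate m c)
      + (\<Sum>p\<in>UNIV. \<Sum>i\<le>m. \<pi> p i * A ys p i + \<pi> p i * C ys zs p i)" for ys zs
    unfolding T_def Tprob_three_blocks[OF q0] \<pi>_def A_def C_def g_def h_def
    by (simp add: distrib_left)
  have "T ys zs' + T ys' zs - T ys' zs' - T ys zs
      = (\<Sum>p\<in>UNIV. \<Sum>i\<le>m. \<pi> p i * (C ys zs' p i + C ys' zs p i - C ys' zs' p i - C ys zs p i))"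
    unfolding T by (simp add: sum.distrib sum_subtractf algebra_simps)
  then show ?thesis
    unfolding C_def conv_pairing_cross_difference by (simp add: cross_pairing_def \<pi>_def g_def h_def)
qed

section \<open>The relation R3\<close>

lemma R3_blocksI:
  "n \<noteq> k \<Longrightarrow> m = k \<or> m = n \<Longrightarrow> R3 (replicate m 0 @ replicate n 1 @ replicate k 2) (replicate m 3)"
  unfolding R3_def by blast

lemma not_R3_equal_blocks: "\<not> R3 (replicate m 0 @ replicate n 1 @ replicate n 2) w"
proof
  assume "R3 (replicate m 0 @ replicate n 1 @ replicate n 2) w"
  then obtain m' n' k' where
    blocks: "replicate m 0 @ replicate n 1 @ replicate n 2 = replicate m' 0 @ replicate n' 1 @ replicate k' (2::nat)"
    and "n' \<noteq> k'"
    unfolding R3_def by blast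
  have "length (filter ((=) a) (replicate m 0 @ replicate n 1 @ replicate n 2))
      = length (filter ((=) a) (replicate m' 0 @ replicate n' 1 @ replicate k' (2::nat)))" for a
    by (simp only: blocks)
  from this[of 1] this[of 2] \<open>n' \<noteq> k'\<close> show False
    by (simp add: filter_replicate)
qed

lemma computes_with_prob_imp_isolated:
  assumes "1/2 < \<alpha>" and "computes_with_prob S1 S2 V f q0 Qa Qr R \<alpha>"
  shows "computes_isolated S1 S2 V f q0 Qa Qr R"
  unfolding computes_isolated_def
proof (intro exI conjI)
  show "(0::real) < 1/2" "(1/2::real) < 1" "0 < \<alpha> - 1/2"
    using assms(1) by simp_all
  show "\<forall>v\<in>lists S1. \<forall>w\<in>lists S2.
      (R v w \<longrightarrow> 1/2 + (\<alpha> - 1/2) \<le> Tprob V f q0 Qa Qr w v) \<and>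
      (\<not> R v w \<longrightarrow> Tprob V f q0 Qa Qr w v \<le> 1/2 - (\<alpha> - 1/2))"
    using assms(2) unfolding computes_with_prob_def by simp
qed

lemma R3_cross_gap:
  fixes V :: "nat sym \<Rightarrow> 'q::finite \<Rightarrow> 'q \<Rightarrow> real" and f :: "nat sym \<Rightarrow> 'q \<Rightarrow> nat list"
  assumes "computes_isolated {0,1,2} {3} V f q0 Qa Qr R3"
  defines "T \<equiv> \<lambda>m n k. Tprob V f q0 Qa Qr (replicate m 3) (replicate m 0 @ replicate n 1 @ replicate k 2)"
  obtains \<epsilon> where "0 < \<epsilon>" and "\<And>m N. N \<noteq> m \<Longrightarrow> \<epsilon> \<le> T m m N + T m N m - T m N N - T m m m"
proof -
  obtain \<alpha> \<epsilon> where "0 < \<epsilon>" and correct: "\<forall>v \<in> lists {0,1,2}. \<forall>w \<in> lists {3}.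
      (R3 v w \<longrightarrow> \<alpha> + \<epsilon> \<le> Tprob V f q0 Qa Qr w v) \<and>
      (\<not> R3 v w \<longrightarrow> Tprob V f q0 Qa Qr w v \<le> \<alpha> - \<epsilon>)"
    using assms(1) unfolding computes_isolated_def by blast
  have inputs: "replicate m 0 @ replicate n 1 @ replicate k 2 \<in> lists {0,1,2::nat}"
    and outputs: "replicate m (3::nat) \<in> lists {3}" for m n k
    by auto
  have accept: "\<alpha> + \<epsilon> \<le> T m n k" if "n \<noteq> k" "m = k \<or> m = n" for m n k
    using correct[rule_format, OF inputs outputs] R3_blocksI[OF that] unfolding T_def by blast
  have reject: "T m n n \<le> \<alpha> - \<epsilon>" for m n
    using correct[rule_format, OF inputs outputs] not_R3_equal_blocks unfolding T_def by blast
  show thesis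
  proof (rule that)
    show "0 < 4 * \<epsilon>" using \<open>0 < \<epsilon>\<close> by simp
    show "4 * \<epsilon> \<le> T m m N + T m N m - T m N N - T m m m" if "N \<noteq> m" for m N
    proof -
      have "\<alpha> + \<epsilon> \<le> T m m N" "\<alpha> + \<epsilon> \<le> T m N m"
        using that by (auto intro: accept)
      then show ?thesis using reject[of m N] reject[of m m] by linarith
    qed
  qed
qed

lemma not_computes_isolated_R3:
  fixes V :: "nat sym \<Rightarrow> 'q::finite \<Rightarrow> 'q \<Rightarrow> real" and f :: "nat sym \<Rightarrow> 'q \<Rightarrow> nat list"
  assumes "pfst {0,1,2} {3} V f q0 Qa Qr"
  shows "\<not> computes_isolated {0,1,2} {3} V f q0 Qa Qr R3"
proof
  define T where "T m n k = Tprob V f q0 Qa Qr (replicate m 3) (replicate m 0 @ replicate n 1 @ replicate k (2::nat))"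
    for m n k
  assume "computes_isolated {0,1,2} {3} V f q0 Qa Qr R3"
  then obtain \<epsilon> where "0 < \<epsilon>" and gap: "\<And>m N. N \<noteq> m \<Longrightarrow> \<epsilon> \<le> T m m N + T m N m - T m N N - T m m m"
    unfolding T_def by (rule R3_cross_gap) blast
  show False
  proof (cases "q0 \<in> Qa \<or> q0 \<in> Qr")
    case True
    then have "T m n k = T m 0 0" for m n k
      by (auto simp: T_def Tprob_def)
    from this[of 0 0 1] this[of 0 1 0] this[of 0 1 1] show False
      using gap[of 1 0] \<open>0 < \<epsilon>\<close> by simp
  next
    case False
    have stochastic: "stochastic (V a)" if "a \<in> Sym ` {0,1,2} \<union> {LEnd, REnd}" for a
      using assms that unfolding pfst_def by blast
    show False
    proof (rule no_uniform_cross_gap)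
      show "0 \<le> reach V f Qa Qr (map Sym (replicate n 1)) p p' (replicate j 3)" for n p p' j
        by (intro reach_nonneg) (auto intro: stochastic)
      show "(\<Sum>p'\<in>UNIV. \<Sum>j\<le>J. reach V f Qa Qr (map Sym (replicate n 1)) p p' (replicate j 3)) \<le> 1"
        for n p J by (intro reach_sum_replicate_le_1) (auto intro: stochastic)
      show "0 \<le> acc V f Qa Qr (map Sym (replicate k 2) @ [REnd]) p (replicate j 3)" for k p j
        by (intro acc_nonneg) (auto intro: stochastic)
      show "(\<Sum>j\<le>J. acc V f Qa Qr (map Sym (replicate k 2) @ [REnd]) p (replicate j 3)) \<le> 1" for k p J
        by (intro acc_sum_replicate_le_1) (auto intro: stochastic)
      show "0 \<le> reach V f Qa Qr (LEnd # map Sym (replicate m 0)) q0 p (replicate i 3)" for m p i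
        by (intro reach_nonneg) (auto intro: stochastic)
      show "(\<Sum>p\<in>UNIV. \<Sum>i\<le>m. reach V f Qa Qr (LEnd # map Sym (replicate m 0)) q0 p (replicate i 3)) \<le> 1"
        for m by (intro reach_sum_replicate_le_1) (auto intro: stochastic)
      show "\<epsilon> \<le> cross_pairing
          (\<lambda>p i. reach V f Qa Qr (LEnd # map Sym (replicate m 0)) q0 p (replicate i 3))
          (\<lambda>p p' j. reach V f Qa Qr (map Sym (replicate m 1)) p p' (replicate j 3))
          (\<lambda>p p' j. reach V f Qa Qr (map Sym (replicate N 1)) p p' (replicate j 3))
          (\<lambda>p' j. acc V f Qa Qr (map Sym (replicate N 2) @ [REnd]) p' (replicate j 3))
          (\<lambda>p' j. acc V f Qa Qr (map Sym (replicate m 2) @ [REnd]) p' (replicate j 3)) m"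
        if "N \<noteq> m" for m N
        using gap[OF that] False unfolding T_def by (simp add: Tprob_cross_difference)
    qed (use \<open>0 < \<epsilon>\<close> in simp)
  qed
qed

theorem theorem8:
  fixes V :: "nat sym \<Rightarrow> 'q::finite \<Rightarrow> 'q \<Rightarrow> real"
    and f :: "nat sym \<Rightarrow> 'q \<Rightarrow> nat list"
    and q0 :: 'q and Qa Qr :: "'q set"
  assumes "pfst {0,1,2} {3} V f q0 Qa Qr"
  shows "(\<forall>\<alpha>::real. \<alpha> > 1/2 \<longrightarrow> \<not> computes_with_prob {0,1,2} {3} V f q0 Qa Qr R3 \<alpha>)
         \<and> \<not> computes_isolated {0,1,2} {3} V f q0 Qa Qr R3"
  using not_computes_isolated_R3[OF assms] computes_with_prob_imp_isolated by blast

end
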